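(* Let $x_0,y_0$ be positive integers and let $\{(X_t,Y_t)\}_{t\ge 0}$ be the CA competition process with fitness ratio $r=1$ started at $(X_0,Y_0)=(x_0,y_0)$. Let $T=\sup\{t\ge 0: X_t=Y_t\}$ (with $\sup\emptyset=-\infty$). Then, as $t\to\infty$ through the integers, \[ \mathbb{P}[T\ge t]\sim \frac{1}{2^{x_0+y_0-5/2}\sqrt{\pi}\,B(x_0,y_0)}\, t^{-1/2}, \] where $B(x,y)=\int_0^1 s^{x-1}(1-s)^{y-1}\,ds$ is the beta function.
   Context: The CA competition process with fitness ratio $r\ge 1$ started at $(x_0,y_0)$ is the discrete-time Markov chain $\{(X_t,Y_t)\}_{t\ge0}$ on $\{(x,y)\in\mathbb{Z}^2: x\ge1,y\ge1\}$ with $(X_0,Y_0)=(x_0,y_0)$ and transition probabilities: from $(x,y)$ it moves to $(x+1,y)$ with probability $\frac{rx}{rx+y}$ and to $(x,y+1)$ with probability $\frac{y}{rx+y}$. The notation $f(t)\sim g(t)$ means $\lim_{t\to\infty} f(t)/g(t)=1$. *)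

theory Defs
  imports "HOL-Probability.Probability" "HOL-Library.Landau_Symbols"
begin

definition ca_step :: "real \<Rightarrow> nat \<times> nat \<Rightarrow> real \<Rightarrow> nat \<times> nat" where
  "ca_step r s u =
     (let x = fst s; y = snd s in
      if u < r * real x / (r * real x + real y) then (x + 1, y) else (x, y + 1))"

primrec ca_path :: "real \<Rightarrow> nat \<Rightarrow> nat \<Rightarrow> (nat \<Rightarrow> real) \<Rightarrow> nat \<Rightarrow> nat \<times> nat" where
  "ca_path r x0 y0 \<omega> 0 = (x0, y0)"
| "ca_path r x0 y0 \<omega> (Suc t) = ca_step r (ca_path r x0 y0 \<omega> t) (\<omega> t)"

definition ca_space :: "(nat \<Rightarrow> real) measure" where
  "ca_space = PiM UNIV (\<lambda>_. uniform_measure lborel {0..1::real})"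

definition last_tie :: "real \<Rightarrow> nat \<Rightarrow> nat \<Rightarrow> (nat \<Rightarrow> real) \<Rightarrow> ereal" where
  "last_tie r x0 y0 \<omega> =
     Sup {ereal (real t) | t. fst (ca_path r x0 y0 \<omega> t) = snd (ca_path r x0 y0 \<omega> t)}"

end

theory Submission
  imports Defs "HOL-Real_Asymp.Real_Asymp"
begin

text \<open>
  For fitness ratio 1 the process is a Polya urn. The function
  h(x, y) = 2^(2 - x - y) * (sum of binomial (x + y - 1) k over k \<ge> max x y)
  is harmonic for the urn off the diagonal and 1 on it, and its mean along the urn tends to 0:
  at time m the Polya distribution gives each position weight O(1/m), while h is O(m/K^2) at
  distance K from the diagonal (Chebyshev). So h is the probability of a future tie, and
  P(T \<ge> t) is the mean of h at time t. A step from the diagonal point (k, k) lowers h by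
  binomial (2k) k / 4^k \<sim> 1/sqrt(pi k); hence P(T \<ge> t) - P(T \<ge> t + 1) vanishes unless
  t = 2k - x0 - y0, where the Beta-binomial weight of (k, k) makes it \<sim> c k^(-3/2), and summing
  the tail gives P(T \<ge> t) \<sim> 2 c (t/2)^(-1/2).
\<close>

section \<open>The Polya urn on the sequence space\<close>

abbreviation unif01 :: "real measure" where
  "unif01 \<equiv> uniform_measure lborel {0..1}"

lemma prob_space_unif01: "prob_space unif01"
  by (intro prob_space_uniform_measure) auto

interpretation iid_unif01: sequence_space unif01
  by (simp add: sequence_space_def product_prob_space_def product_sigma_finite_def
      prob_space_unif01 prob_space_imp_sigma_finite product_prob_space_axioms_def)

lemma ca_space_eq_sequence_space: "ca_space = iid_unif01.S"
  by (simp add: ca_space_def)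

lemma space_ca_space: "space ca_space = UNIV"
  by (simp add: ca_space_def space_PiM)

lemma emeasure_space_ca_space [simp]: "emeasure ca_space (space ca_space) = 1"
  unfolding ca_space_eq_sequence_space by (rule iid_unif01.emeasure_space_1)

lemma emeasure_unif01_lessThan: "0 \<le> p \<Longrightarrow> p \<le> 1 \<Longrightarrow> emeasure unif01 {..<p} = ennreal p"
proof -
  assume p: "0 \<le> p" "p \<le> 1"
  have "{0..1} \<inter> {..<p} = {0..<p}" using p by auto
  then show ?thesis using p by (simp add: emeasure_uniform_measure divide_ennreal_def)
qed

lemma emeasure_unif01_atLeast: "0 \<le> p \<Longrightarrow> p \<le> 1 \<Longrightarrow> emeasure unif01 {p..} = ennreal (1 - p)"
proof -
  assume p: "0 \<le> p" "p \<le> 1"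
  have "{0..1} \<inter> {p..} = {p..1}" using p by auto
  then show ?thesis using p by (simp add: emeasure_uniform_measure divide_ennreal_def)
qed

definition polya_path :: "nat \<times> nat \<Rightarrow> (nat \<Rightarrow> real) \<Rightarrow> nat \<Rightarrow> nat \<times> nat" where
  "polya_path z \<omega> t = ca_path 1 (fst z) (snd z) \<omega> t"

lemma polya_path_0 [simp]: "polya_path z \<omega> 0 = z"
  by (simp add: polya_path_def)

lemma polya_path_Suc: "polya_path z \<omega> (Suc t) = polya_path (ca_step 1 z (\<omega> 0)) (\<lambda>i. \<omega> (Suc i)) t"
  unfolding polya_path_def by (induction t) auto

lemma measurable_ca_step: "(\<lambda>\<omega>. ca_step 1 z (\<omega> i)) \<in> ca_space \<rightarrow>\<^sub>M count_space UNIV"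
  unfolding ca_step_def Let_def ca_space_def by measurable

lemma measurable_polya_path [measurable]:
  "(\<lambda>\<omega>. polya_path z \<omega> t) \<in> ca_space \<rightarrow>\<^sub>M count_space UNIV"
proof (induction t)
  case 0
  then show ?case by (simp add: polya_path_def)
next
  case (Suc t)
  have "(\<lambda>\<omega>. (\<lambda>z' \<omega>. ca_step 1 z' (\<omega> t)) (polya_path z \<omega> t) \<omega>) \<in> ca_space \<rightarrow>\<^sub>M count_space UNIV"
    by (rule measurable_compose_countable'[OF measurable_ca_step Suc]) auto
  then show ?case by (simp add: polya_path_def)
qed

lemma measurable_shift: "(\<lambda>\<omega> i. \<omega> (Suc i)) \<in> ca_space \<rightarrow>\<^sub>M ca_space"
  unfolding ca_space_def by (rule measurable_PiM_single') (auto simp: space_PiM)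

definition polya_op :: "(nat \<times> nat \<Rightarrow> ennreal) \<Rightarrow> nat \<times> nat \<Rightarrow> ennreal" where
  "polya_op \<phi> z =
     ennreal (real (fst z) / (real (fst z) + real (snd z))) * \<phi> (fst z + 1, snd z)
   + ennreal (real (snd z) / (real (fst z) + real (snd z))) * \<phi> (fst z, snd z + 1)"

lemma polya_op_cong:
  "\<phi> (fst z + 1, snd z) = \<psi> (fst z + 1, snd z) \<Longrightarrow> \<phi> (fst z, snd z + 1) = \<psi> (fst z, snd z + 1)
   \<Longrightarrow> polya_op \<phi> z = polya_op \<psi> z"
  by (simp add: polya_op_def)

lemma polya_op_add: "polya_op (\<lambda>z. \<phi> z + \<psi> z) z = polya_op \<phi> z + polya_op \<psi> z"
  by (simp add: polya_op_def distrib_left)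

text \<open>Conditioning on the first uniform variable: the sequence space is the product of its
  first coordinate and the shifted sequence space.\<close>
lemma nn_integral_first_step:
  fixes K :: "nat \<times> nat \<Rightarrow> (nat \<Rightarrow> real) \<Rightarrow> ennreal"
  assumes K: "\<And>z'. K z' \<in> borel_measurable ca_space" and z: "fst z + snd z > 0"
    and G: "\<And>\<omega>. G \<omega> = K (ca_step 1 z (\<omega> 0)) (\<lambda>i. \<omega> (Suc i))"
  shows "(\<integral>\<^sup>+\<omega>. G \<omega> \<partial>ca_space) = polya_op (\<lambda>z'. \<integral>\<^sup>+\<omega>. K z' \<omega> \<partial>ca_space) z"
proof -
  define x y where "x = fst z" and "y = snd z"
  define p :: real where "p = x / (x + y)"
  have p01: "0 \<le> p" "p \<le> 1" using z by (auto simp: p_def x_def y_def)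
  have "real x + real y > 0" using z unfolding x_def y_def by linarith
  then have q: "real y / (x + y) = 1 - p" by (simp add: p_def field_simps)
  define \<Phi> where "\<Phi> z' = (\<integral>\<^sup>+\<omega>. K z' \<omega> \<partial>ca_space)" for z'
  let ?G = "\<lambda>\<omega>. K (ca_step 1 z (\<omega> 0)) (\<lambda>i. \<omega> (Suc i))"
  have "(\<lambda>\<omega>. (\<lambda>z' \<omega>. K z' (\<lambda>i. \<omega> (Suc i))) (ca_step 1 z (\<omega> 0)) \<omega>) \<in> borel_measurable ca_space"
    by (rule measurable_compose_countable'[OF _ measurable_ca_step])
       (use measurable_comp[OF measurable_shift K] in \<open>auto simp: comp_def\<close>)
  then have Gm: "?G \<in> borel_measurable iid_unif01.S" by (simp add: ca_space_eq_sequence_space)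
  have cm: "(\<lambda>q. case_nat (fst q) (snd q)) \<in> (unif01 \<Otimes>\<^sub>M iid_unif01.S) \<rightarrow>\<^sub>M iid_unif01.S"
    by measurable
  have "(\<integral>\<^sup>+\<omega>. G \<omega> \<partial>ca_space)
      = (\<integral>\<^sup>+\<omega>. ?G \<omega> \<partial>distr (unif01 \<Otimes>\<^sub>M iid_unif01.S) iid_unif01.S (\<lambda>(s, \<omega>). case_nat s \<omega>))"
    by (simp add: G iid_unif01.PiM_iter ca_space_eq_sequence_space)
  also have "\<dots> = (\<integral>\<^sup>+q. ?G (case_nat (fst q) (snd q)) \<partial>(unif01 \<Otimes>\<^sub>M iid_unif01.S))"
    by (subst nn_integral_distr) (auto simp: Gm split_beta')
  also have "\<dots> = (\<integral>\<^sup>+s. \<integral>\<^sup>+\<omega>. ?G (case_nat s \<omega>) \<partial>iid_unif01.S \<partial>unif01)"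
    using measurable_comp[OF cm Gm]
    by (subst iid_unif01.nn_integral_fst[symmetric]) (auto simp: split_beta' comp_def)
  also have "\<dots> = (\<integral>\<^sup>+s. \<Phi> (ca_step 1 z s) \<partial>unif01)"
    by (simp add: \<Phi>_def ca_space_eq_sequence_space)
  also have "\<dots> = (\<integral>\<^sup>+s. \<Phi> (x + 1, y) * indicator {..<p} s + \<Phi> (x, y + 1) * indicator {p..} s \<partial>unif01)"
    by (intro nn_integral_cong) (auto simp: ca_step_def x_def y_def p_def indicator_def)
  also have "\<dots> = \<Phi> (x + 1, y) * emeasure unif01 {..<p} + \<Phi> (x, y + 1) * emeasure unif01 {p..}"
    by (simp del: emeasure_uniform_measure add: nn_integral_add nn_integral_cmult_indicator)
  also have "\<dots> = ennreal p * \<Phi> (x + 1, y) + ennreal (real y / (x + y)) * \<Phi> (x, y + 1)"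
    using p01 by (simp del: emeasure_uniform_measure
        add: emeasure_unif01_lessThan emeasure_unif01_atLeast mult.commute q[symmetric])
  finally show ?thesis
    by (simp add: polya_op_def \<Phi>_def p_def x_def y_def)
qed

section \<open>Hitting probabilities\<close>

definition path_mean :: "(nat \<times> nat \<Rightarrow> ennreal) \<Rightarrow> nat \<times> nat \<Rightarrow> nat \<Rightarrow> ennreal" where
  "path_mean \<phi> z t = (\<integral>\<^sup>+\<omega>. \<phi> (polya_path z \<omega> t) \<partial>ca_space)"

lemma path_mean_0: "path_mean \<phi> z 0 = \<phi> z"
  by (simp add: path_mean_def)

lemma path_mean_Suc:
  "fst z + snd z > 0 \<Longrightarrow> path_mean \<phi> z (Suc t) = polya_op (\<lambda>z'. path_mean \<phi> z' t) z"
  unfolding path_mean_def by (rule nn_integral_first_step) (simp_all add: polya_path_Suc)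

lemma path_mean_Suc':
  "fst z + snd z > 0 \<Longrightarrow> path_mean \<phi> z (Suc t) = path_mean (polya_op \<phi>) z t"
proof (induction t arbitrary: z)
  case 0
  then show ?case by (simp add: path_mean_Suc path_mean_0)
next
  case (Suc t)
  have "path_mean \<phi> z (Suc (Suc t)) = polya_op (\<lambda>z'. path_mean \<phi> z' (Suc t)) z"
    using Suc.prems by (rule path_mean_Suc)
  also have "\<dots> = polya_op (\<lambda>z'. path_mean (polya_op \<phi>) z' t) z"
    by (rule polya_op_cong) (simp_all add: Suc.IH)
  also have "\<dots> = path_mean (polya_op \<phi>) z (Suc t)"
    using Suc.prems by (rule path_mean_Suc[symmetric])
  finally show ?case .
qed

lemma path_mean_add: "path_mean (\<lambda>z. \<phi> z + \<psi> z) z t = path_mean \<phi> z t + path_mean \<psi> z t"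
  unfolding path_mean_def by (rule nn_integral_add) auto

definition hit_prob :: "(nat \<times> nat \<Rightarrow> bool) \<Rightarrow> nat \<times> nat \<Rightarrow> nat \<Rightarrow> ennreal" where
  "hit_prob D z t = emeasure ca_space {\<omega> \<in> space ca_space. \<exists>s\<ge>t. D (polya_path z \<omega> s)}"

definition hit_by_prob :: "(nat \<times> nat \<Rightarrow> bool) \<Rightarrow> nat \<times> nat \<Rightarrow> nat \<Rightarrow> ennreal" where
  "hit_by_prob D z m = emeasure ca_space {\<omega> \<in> space ca_space. \<exists>s\<le>m. D (polya_path z \<omega> s)}"

definition avoid_mean ::
  "(nat \<times> nat \<Rightarrow> bool) \<Rightarrow> (nat \<times> nat \<Rightarrow> ennreal) \<Rightarrow> nat \<times> nat \<Rightarrow> nat \<Rightarrow> ennreal" where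
  "avoid_mean D \<phi> z m =
     (\<integral>\<^sup>+\<omega>. indicator {\<omega> \<in> space ca_space. \<forall>s\<le>m. \<not> D (polya_path z \<omega> s)} \<omega>
             * \<phi> (polya_path z \<omega> m) \<partial>ca_space)"

lemma ex_ge_Suc_polya_path:
  "(\<exists>s\<ge>Suc t. D (polya_path z \<omega> s)) \<longleftrightarrow>
   (\<exists>s\<ge>t. D (polya_path (ca_step 1 z (\<omega> 0)) (\<lambda>i. \<omega> (Suc i)) s))"
  by (metis Suc_le_D Suc_le_mono polya_path_Suc)

lemma ex_le_Suc_polya_path:
  "(\<exists>s\<le>Suc m. D (polya_path z \<omega> s)) \<longleftrightarrow>
   D z \<or> (\<exists>s\<le>m. D (polya_path (ca_step 1 z (\<omega> 0)) (\<lambda>i. \<omega> (Suc i)) s))"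
  by (auto simp: polya_path_Suc) (metis Suc_le_mono not0_implies_Suc polya_path_0 polya_path_Suc)

lemma hit_prob_Suc:
  assumes "fst z + snd z > 0"
  shows "hit_prob D z (Suc t) = polya_op (\<lambda>z'. hit_prob D z' t) z"
proof -
  have "hit_prob D z (Suc t)
      = (\<integral>\<^sup>+\<omega>. indicator {\<omega> \<in> space ca_space. \<exists>s\<ge>Suc t. D (polya_path z \<omega> s)} \<omega> \<partial>ca_space)"
    by (simp add: hit_prob_def)
  also have "\<dots> = polya_op (\<lambda>z'.
      \<integral>\<^sup>+\<omega>. indicator {\<omega> \<in> space ca_space. \<exists>s\<ge>t. D (polya_path z' \<omega> s)} \<omega> \<partial>ca_space) z"
    by (rule nn_integral_first_step[OF _ assms])
       (simp_all add: space_ca_space indicator_def ex_ge_Suc_polya_path)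
  finally show ?thesis by (simp add: hit_prob_def)
qed

lemma hit_by_prob_0: "hit_by_prob D z 0 = (if D z then 1 else 0)"
  by (simp add: hit_by_prob_def)

lemma hit_by_prob_Suc:
  assumes "fst z + snd z > 0"
  shows "hit_by_prob D z (Suc m) = (if D z then 1 else polya_op (\<lambda>z'. hit_by_prob D z' m) z)"
proof (cases "D z")
  case True
  then have "{\<omega> \<in> space ca_space. \<exists>s\<le>Suc m. D (polya_path z \<omega> s)} = space ca_space"
    by (auto intro: exI[of _ 0])
  then show ?thesis using True by (simp add: hit_by_prob_def)
next
  case False
  have "hit_by_prob D z (Suc m)
      = (\<integral>\<^sup>+\<omega>. indicator {\<omega> \<in> space ca_space. \<exists>s\<le>Suc m. D (polya_path z \<omega> s)} \<omega> \<partial>ca_space)"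
    by (simp add: hit_by_prob_def)
  also have "\<dots> = polya_op (\<lambda>z'.
      \<integral>\<^sup>+\<omega>. indicator {\<omega> \<in> space ca_space. \<exists>s\<le>m. D (polya_path z' \<omega> s)} \<omega> \<partial>ca_space) z"
    by (rule nn_integral_first_step[OF _ assms])
       (use False in \<open>simp_all add: space_ca_space indicator_def ex_le_Suc_polya_path\<close>)
  finally show ?thesis using False by (simp add: hit_by_prob_def)
qed

lemma avoid_mean_0: "avoid_mean D \<phi> z 0 = (if D z then 0 else \<phi> z)"
proof -
  have "{\<omega> \<in> space ca_space. \<forall>s\<le>0. \<not> D (polya_path z \<omega> s)} = (if D z then {} else space ca_space)"
    by auto
  moreover have "(\<integral>\<^sup>+\<omega>. indicator (space ca_space) \<omega> * \<phi> z \<partial>ca_space) = \<phi> z"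
    by (subst nn_integral_cong[where v = "\<lambda>_. \<phi> z"]) auto
  ultimately show ?thesis by (simp add: avoid_mean_def)
qed

lemma avoid_mean_Suc:
  assumes "fst z + snd z > 0"
  shows "avoid_mean D \<phi> z (Suc m) = (if D z then 0 else polya_op (\<lambda>z'. avoid_mean D \<phi> z' m) z)"
proof (cases "D z")
  case True
  then have "{\<omega> \<in> space ca_space. \<forall>s\<le>Suc m. \<not> D (polya_path z \<omega> s)} = {}"
    by auto
  then show ?thesis using True by (simp add: avoid_mean_def)
next
  case False
  have "\<And>\<omega>. (\<forall>s\<le>Suc m. \<not> D (polya_path z \<omega> s)) \<longleftrightarrow>
      (\<forall>s\<le>m. \<not> D (polya_path (ca_step 1 z (\<omega> 0)) (\<lambda>i. \<omega> (Suc i)) s))"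
    using ex_le_Suc_polya_path False by blast
  then have "avoid_mean D \<phi> z (Suc m) = polya_op (\<lambda>z'. avoid_mean D \<phi> z' m) z"
    unfolding avoid_mean_def
    by (intro nn_integral_first_step[OF _ assms]) (simp_all add: space_ca_space indicator_def polya_path_Suc)
  then show ?thesis using False by simp
qed

lemma harmonic_split:
  assumes harmonic: "\<And>z. 1 \<le> fst z \<Longrightarrow> 1 \<le> snd z \<Longrightarrow> \<not> D z \<Longrightarrow> polya_op F z = F z"
    and one: "\<And>z. 1 \<le> fst z \<Longrightarrow> 1 \<le> snd z \<Longrightarrow> D z \<Longrightarrow> F z = 1"
  shows "1 \<le> fst z \<Longrightarrow> 1 \<le> snd z \<Longrightarrow> F z = hit_by_prob D z m + avoid_mean D F z m"
proof (induction m arbitrary: z)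
  case 0
  then show ?case by (simp add: hit_by_prob_0 avoid_mean_0 one)
next
  case (Suc m)
  have pos: "fst z + snd z > 0" using Suc.prems by simp
  show ?case
  proof (cases "D z")
    case True
    then show ?thesis using Suc.prems pos by (simp add: hit_by_prob_Suc avoid_mean_Suc one)
  next
    case False
    have "hit_by_prob D z (Suc m) + avoid_mean D F z (Suc m)
        = polya_op (\<lambda>z'. hit_by_prob D z' m + avoid_mean D F z' m) z"
      using pos False by (simp add: hit_by_prob_Suc avoid_mean_Suc polya_op_add)
    also have "\<dots> = polya_op F z"
      using Suc.prems by (intro polya_op_cong) (simp_all add: Suc.IH[symmetric])
    also have "\<dots> = F z" using harmonic Suc.prems False by simp
    finally show ?thesis by simp
  qed
qed

lemma SUP_hit_by_prob: "(SUP m. hit_by_prob D z m) = hit_prob D z 0"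
proof -
  have "(SUP m. hit_by_prob D z m)
      = emeasure ca_space (\<Union>m. {\<omega> \<in> space ca_space. \<exists>s\<le>m. D (polya_path z \<omega> s)})"
    unfolding hit_by_prob_def
    by (rule SUP_emeasure_incseq) (auto simp: incseq_def intro: order_trans)
  also have "(\<Union>m. {\<omega> \<in> space ca_space. \<exists>s\<le>m. D (polya_path z \<omega> s)})
      = {\<omega> \<in> space ca_space. \<exists>s\<ge>0. D (polya_path z \<omega> s)}"
    by auto
  finally show ?thesis by (simp add: hit_prob_def)
qed

lemma avoid_mean_le_path_mean: "avoid_mean D \<phi> z m \<le> path_mean \<phi> z m"
  unfolding avoid_mean_def path_mean_def
  by (intro nn_integral_mono) (auto simp: indicator_def)

text \<open>Let m tend to infinity in harmonic_split: the first summand increases to the hitting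
  probability and the second is bounded by the mean of F at time m.\<close>
lemma hit_prob_eq_path_mean:
  assumes harmonic: "\<And>z. 1 \<le> fst z \<Longrightarrow> 1 \<le> snd z \<Longrightarrow> \<not> D z \<Longrightarrow> polya_op F z = F z"
    and one: "\<And>z. 1 \<le> fst z \<Longrightarrow> 1 \<le> snd z \<Longrightarrow> D z \<Longrightarrow> F z = 1"
    and small: "\<And>z e. 1 \<le> fst z \<Longrightarrow> 1 \<le> snd z \<Longrightarrow> e > 0 \<Longrightarrow> \<exists>m. path_mean F z m \<le> ennreal e"
  shows "1 \<le> fst z \<Longrightarrow> 1 \<le> snd z \<Longrightarrow> hit_prob D z t = path_mean F z t"
proof (induction t arbitrary: z)
  case 0
  have split: "F z = hit_by_prob D z m + avoid_mean D F z m" for m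
    by (rule harmonic_split[OF harmonic one 0])
  have "hit_prob D z 0 \<le> F z"
    unfolding SUP_hit_by_prob[symmetric] using split le_iff_add by (blast intro: SUP_least)
  moreover have "F z \<le> hit_prob D z 0"
  proof (rule ennreal_le_epsilon)
    fix e :: real
    assume "0 < e"
    then obtain m where "path_mean F z m \<le> ennreal e" using small[OF 0] by blast
    then have "avoid_mean D F z m \<le> ennreal e" by (rule order_trans[OF avoid_mean_le_path_mean])
    moreover have "hit_by_prob D z m \<le> hit_prob D z 0"
      unfolding SUP_hit_by_prob[symmetric] by (rule SUP_upper) simp
    ultimately show "F z \<le> hit_prob D z 0 + ennreal e" unfolding split[of m] by (intro add_mono)
  qed
  ultimately show ?case by (simp add: path_mean_0)
next
  case (Suc t)
  have pos: "fst z + snd z > 0" using Suc.prems by simp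
  have "hit_prob D z (Suc t) = polya_op (\<lambda>z'. hit_prob D z' t) z" using pos by (rule hit_prob_Suc)
  also have "\<dots> = polya_op (\<lambda>z'. path_mean F z' t) z"
    using Suc.prems by (intro polya_op_cong) (simp_all add: Suc.IH)
  also have "\<dots> = path_mean F z (Suc t)" using pos by (rule path_mean_Suc[symmetric])
  finally show ?case .
qed

section \<open>The urn at a fixed time\<close>

text \<open>The Polya--Eggenberger distribution: the probability that the urn started at (x, y)
  has added a balls of the first colour during its first t steps.\<close>
definition polya_weight :: "nat \<Rightarrow> nat \<Rightarrow> nat \<Rightarrow> nat \<Rightarrow> real" where
  "polya_weight x y t a = real (t choose a) * pochhammer (real x) a * pochhammer (real y) (t - a)
     / pochhammer (real x + real y) t"

lemma polya_weight_nonneg: "polya_weight x y t a \<ge> 0"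
  unfolding polya_weight_def pochhammer_prod
  by (intro divide_nonneg_nonneg mult_nonneg_nonneg prod_nonneg) auto

lemma polya_weight_0: "polya_weight x y 0 a = (if a = 0 then 1 else 0)"
  by (simp add: polya_weight_def)

lemma polya_weight_Suc:
  assumes "x + y > 0"
  shows "polya_weight x y (Suc t) a =
    (if a = 0 then 0 else real x / (real x + real y) * polya_weight (x+1) y t (a-1))
  + (if a \<le> t then real y / (real x + real y) * polya_weight x (y+1) t a else 0)"
proof -
  have XY: "real x + real y > 0" using assms by linarith
  have pXY: "pochhammer (real x + real y) (Suc t) = (real x + real y) * pochhammer (real x + real y + 1) t"
    by (simp add: pochhammer_rec)
  have ppos: "pochhammer (real x + real y + 1) t > 0"
    using XY by (intro pochhammer_pos) simp
  show ?thesis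
  proof (cases a)
    case 0
    have "pochhammer (real y) (Suc t) = real y * pochhammer (real y + 1) t" by (simp add: pochhammer_rec)
    then show ?thesis using 0 XY ppos by (simp add: polya_weight_def pXY field_simps add_ac)
  next
    case (Suc k)
    show ?thesis
    proof (cases "k \<le> t")
      case False
      then show ?thesis using Suc by (simp add: polya_weight_def binomial_eq_0)
    next
      case True
      have px: "pochhammer (real x) (Suc k) = real x * pochhammer (real x + 1) k" by (simp add: pochhammer_rec)
      have c: "real (Suc t choose Suc k) = real (t choose k) + real (t choose Suc k)" by simp
      show ?thesis
      proof (cases "k = t")
        case True
        have "pochhammer (real x) (Suc t) = real x * pochhammer (1 + real x) t"
          by (simp add: pochhammer_rec add.commute)
        then show ?thesis using Suc XY ppos True by (simp add: polya_weight_def pXY field_simps add_ac)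
      next
        case False
        with \<open>k \<le> t\<close> have kt: "Suc k \<le> t" by simp
        have py: "pochhammer (real y) (t - k) = real y * pochhammer (real y + 1) (t - Suc k)"
        proof -
          have "t - k = Suc (t - Suc k)" using kt by simp
          then show ?thesis by (simp add: pochhammer_rec)
        qed
        show ?thesis using Suc kt XY ppos
          by (simp add: polya_weight_def pXY px py c field_simps add_ac) (simp add: add_divide_distrib)
      qed
    qed
  qed
qed

lemma path_mean_eq_sum:
  "x + y > 0 \<Longrightarrow>
   path_mean \<phi> (x, y) t = (\<Sum>a\<le>t. ennreal (polya_weight x y t a) * \<phi> (x + a, y + (t - a)))"
proof (induction t arbitrary: x y)
  case 0
  then show ?case by (simp add: path_mean_0 polya_weight_0)
next
  case (Suc t)
  define p q where "p = real x / (real x + real y)" and "q = real y / (real x + real y)"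
  define f where "f a = \<phi> (x + a, y + (Suc t - a))" for a
  define u v where "u a = (if a = 0 then 0 else p * polya_weight (x + 1) y t (a - 1))"
    and "v a = (if a \<le> t then q * polya_weight x (y + 1) t a else 0)" for a
  have pq: "p \<ge> 0" "q \<ge> 0" by (simp_all add: p_def q_def)
  have uv: "u a \<ge> 0" "v a \<ge> 0" for a
    using pq by (simp_all add: u_def v_def polya_weight_nonneg)
  have "path_mean \<phi> (x, y) (Suc t)
      = ennreal p * path_mean \<phi> (x + 1, y) t + ennreal q * path_mean \<phi> (x, y + 1) t"
    using Suc.prems by (simp add: path_mean_Suc polya_op_def p_def q_def)
  also have "ennreal p * path_mean \<phi> (x + 1, y) t = (\<Sum>a\<le>Suc t. ennreal (u a) * f a)"
    using Suc.IH[of "x + 1" y] pq by (subst sum.atMost_Suc_shift)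
      (simp add: u_def f_def sum_distrib_left ennreal_mult mult.assoc polya_weight_nonneg)
  also have "ennreal q * path_mean \<phi> (x, y + 1) t = (\<Sum>a\<le>Suc t. ennreal (v a) * f a)"
    using Suc.IH[of x "y + 1"] pq
    by (simp add: v_def f_def sum_distrib_left ennreal_mult mult.assoc Suc_diff_le polya_weight_nonneg)
  also have "(\<Sum>a\<le>Suc t. ennreal (u a) * f a) + (\<Sum>a\<le>Suc t. ennreal (v a) * f a)
      = (\<Sum>a\<le>Suc t. ennreal (polya_weight x y (Suc t) a) * f a)"
    unfolding sum.distrib[symmetric]
  proof (rule sum.cong[OF refl])
    fix a
    have "polya_weight x y (Suc t) a = u a + v a"
      unfolding u_def v_def p_def q_def by (rule polya_weight_Suc[OF Suc.prems])
    then show "ennreal (u a) * f a + ennreal (v a) * f a = ennreal (polya_weight x y (Suc t) a) * f a"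
      by (simp add: ennreal_plus[OF uv] distrib_right)
  qed
  finally show ?case by (simp add: f_def)
qed

lemma sum_polya_weight: "x + y > 0 \<Longrightarrow> (\<Sum>a\<le>m. polya_weight x y m a) = 1"
proof -
  assume "x + y > 0"
  then have "ennreal (\<Sum>a\<le>m. polya_weight x y m a) = 1"
    using path_mean_eq_sum[of x y "\<lambda>_. 1" m] by (simp add: path_mean_def sum_ennreal polya_weight_nonneg)
  then show ?thesis by (simp add: sum_nonneg polya_weight_nonneg)
qed

lemma pochhammer_mult_fact: "x \<ge> 1 \<Longrightarrow> pochhammer (real x) a * fact (x - 1) = fact (x + a - 1)"
proof (induction a)
  case 0 then show ?case by simp
next
  case (Suc a)
  have "pochhammer (real x) (Suc a) * fact (x - 1) = (pochhammer (real x) a * fact (x - 1)) * (real x + real a)"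
    by (simp add: pochhammer_Suc algebra_simps)
  also have "\<dots> = fact (x + a - 1) * real (x + a)" using Suc by simp
  also have "\<dots> = fact (x + Suc a - 1)"
    using Suc.prems by (metis Suc_diff_le add_Suc_right diff_Suc_1 fact_Suc le_add1 le_trans mult.commute of_nat_fact of_nat_mult)
  finally show ?case .
qed

definition beta_coeff :: "nat \<Rightarrow> nat \<Rightarrow> real" where
  "beta_coeff x y = fact (x + y - 1) / (fact (x - 1) * fact (y - 1))"

lemma polya_weight_fact:
  assumes x: "x \<ge> 1" and y: "y \<ge> 1" and a: "a \<le> m"
  shows "polya_weight x y m a = beta_coeff x y * (fact m * fact (x + a - 1) * fact (y + (m - a) - 1))
           / (fact a * fact (m - a) * fact (x + y + m - 1))"
proof -
  have px: "pochhammer (real x) a = fact (x + a - 1) / fact (x - 1)"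
    using pochhammer_mult_fact[OF x] by (simp add: eq_divide_eq)
  have py: "pochhammer (real y) (m - a) = fact (y + (m - a) - 1) / fact (y - 1)"
    using pochhammer_mult_fact[OF y] by (simp add: eq_divide_eq)
  have pxy: "pochhammer (real x + real y) m = fact (x + y + m - 1) / fact (x + y - 1)"
    using pochhammer_mult_fact[of "x + y" m] x by (simp add: eq_divide_eq)
  have c: "real (m choose a) = fact m / (fact a * fact (m - a))"
    using a by (simp add: binomial_fact)
  show ?thesis unfolding polya_weight_def px py pxy c beta_coeff_def by (simp add: field_simps)
qed

lemma beta_coeff_pos: "beta_coeff x y > 0"
  by (simp add: beta_coeff_def)

lemma fact_mult_fact_le:
  "fact (a+b+1) * fact (a+x') * fact (b+y') \<le> (fact a * fact b * fact (a+b+x'+y'+1) :: nat)"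
proof (induction x')
  case 0
  show ?case
  proof (induction y')
    case 0 then show ?case by simp
  next
    case (Suc y')
    have "fact (a+b+1) * fact (a+0) * fact (b + Suc y') = (b + Suc y') * (fact (a+b+1) * fact (a+0) * fact (b + y'))"
      by (simp add: algebra_simps)
    also have "\<dots> \<le> (a+b+0+Suc y'+1) * (fact a * fact b * fact (a+b+0+y'+1))"
      by (intro mult_mono Suc) auto
    also have "\<dots> = fact a * fact b * fact (a+b+0+Suc y'+1)" by (simp add: algebra_simps)
    finally show ?case .
  qed
next
  case (Suc x')
  have "fact (a+b+1) * fact (a+Suc x') * fact (b + y') = (a + Suc x') * (fact (a+b+1) * fact (a+x') * fact (b + y'))"
    by (simp add: algebra_simps)
  also have "\<dots> \<le> (a+b+Suc x'+y'+1) * (fact a * fact b * fact (a+b+x'+y'+1))"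
    by (intro mult_mono Suc) auto
  also have "\<dots> = fact a * fact b * fact (a+b+Suc x'+y'+1)" by (simp add: algebra_simps)
  finally show ?case .
qed

lemma polya_weight_le:
  assumes x: "x \<ge> 1" and y: "y \<ge> 1" and a: "a \<le> m"
  shows "polya_weight x y m a \<le> beta_coeff x y / (real m + 1)"
proof -
  define b where "b = m - a"
  have eqs: "a + b = m" "m + (x - 1) + (y - 1) + 1 = x + y + m - 1"
    "a + (x - 1) = x + a - 1" "b + (y - 1) = y + b - 1"
    using x y a by (auto simp: b_def)
  have "fact (m + 1) * fact (x + a - 1) * fact (y + b - 1) \<le> (fact a * fact b * fact (x + y + m - 1) :: nat)"
    using fact_mult_fact_le[of a b "x - 1" "y - 1", unfolded eqs] .
  then have "real (fact (m + 1) * fact (x + a - 1) * fact (y + b - 1))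
      \<le> real (fact a * fact b * fact (x + y + m - 1))"
    by (simp only: of_nat_le_iff)
  then have le: "(real m + 1) * fact m * fact (x + a - 1) * fact (y + b - 1)
      \<le> (fact a * fact b * fact (x + y + m - 1) :: real)"
    by (simp add: algebra_simps)
  have "polya_weight x y m a * (real m + 1)
      = beta_coeff x y * ((real m + 1) * fact m * fact (x + a - 1) * fact (y + b - 1))
        / (fact a * fact b * fact (x + y + m - 1))"
    unfolding polya_weight_fact[OF x y a] b_def[symmetric] by (simp add: algebra_simps)
  also have "\<dots> \<le> beta_coeff x y"
    using le beta_coeff_pos[of x y] by (simp add: divide_le_eq)
  finally show ?thesis by (simp add: le_divide_eq)
qed

section \<open>Binomial tails and the probability of a tie\<close>

definition binom_tail :: "nat \<Rightarrow> nat \<Rightarrow> nat" where "binom_tail N m = (\<Sum>k\<in>{m..N}. N choose k)"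

lemma binom_tail_eq_choose_add: "binom_tail n x = (n choose x) + binom_tail n (Suc x)"
proof (cases "x \<le> n")
  case True
  then have "{x..n} = insert x {Suc x..n}" by auto
  then show ?thesis by (simp add: binom_tail_def)
next
  case False then show ?thesis by (simp add: binom_tail_def binomial_eq_0)
qed

lemma binom_tail_Suc_Suc: "binom_tail (Suc N) (Suc x) = binom_tail N (Suc x) + binom_tail N x"
proof -
  have "binom_tail (Suc N) (Suc x) = (\<Sum>j\<in>{x..N}. Suc N choose Suc j)"
    unfolding binom_tail_def by (rule sum.shift_bounds_cl_Suc_ivl)
  also have "\<dots> = (\<Sum>j\<in>{x..N}. N choose j) + (\<Sum>j\<in>{x..N}. N choose Suc j)"
    by (simp add: sum.distrib)
  also have "(\<Sum>j\<in>{x..N}. N choose Suc j) = (\<Sum>k\<in>{Suc x..Suc N}. N choose k)"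
    by (rule sum.shift_bounds_cl_Suc_ivl[symmetric])
  also have "\<dots> = binom_tail N (Suc x)"
    unfolding binom_tail_def by (simp add: sum.cl_ivl_Suc)
  finally show ?thesis by (simp add: binom_tail_def)
qed

lemma sum_lessThan_choose_eq_binom_tail: "a \<le> Suc N \<Longrightarrow> (\<Sum>j<a. N choose j) = binom_tail N (Suc N - a)"
  unfolding binom_tail_def
  by (rule sum.reindex_bij_witness[where i="\<lambda>k. N - k" and j="\<lambda>j. N - j"])
     (auto simp: binomial_symmetric[symmetric])

lemma binom_tail_complement: "m \<le> Suc N \<Longrightarrow> 2 ^ N = (\<Sum>j<m. N choose j) + binom_tail N m"
proof -
  assume m: "m \<le> Suc N"
  have "{..N} = {..<m} \<union> {m..N}" using m by auto
  then have "(\<Sum>j\<le>N. N choose j) = (\<Sum>j<m. N choose j) + binom_tail N m"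
    unfolding binom_tail_def by (simp add: sum.union_disjoint ivl_disj_int)
  then show ?thesis by (simp add: choose_row_sum)
qed

lemma binom_tail_le_power: "binom_tail N m \<le> 2 ^ N"
proof -
  have "binom_tail N m \<le> (\<Sum>j\<le>N. N choose j)"
    unfolding binom_tail_def by (rule sum_mono2) auto
  then show ?thesis by (simp add: choose_row_sum)
qed

lemma binom_tail_harmonic:
  assumes "y < x"
  shows "x * binom_tail (x+y) (Suc x) + y * binom_tail (x+y) x = 2 * (x+y) * binom_tail (x+y-1) x"
proof -
  define n where "n = x + y"
  have "n > 0" using assms by (simp add: n_def)
  then obtain N where N: "n = Suc N" using gr0_implies_Suc by blast
  have 1: "binom_tail n x = (n choose x) + binom_tail n (Suc x)" by (rule binom_tail_eq_choose_add)
  have 2: "y * (n choose x) = n * (N choose x)"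
    using binomial_absorb_comp[of n x] N by (simp add: n_def)
  have 3: "binom_tail n (Suc x) = binom_tail N (Suc x) + binom_tail N x" using N binom_tail_Suc_Suc by simp
  have 4: "binom_tail N x = (N choose x) + binom_tail N (Suc x)" by (rule binom_tail_eq_choose_add)
  have "x * binom_tail n (Suc x) + y * binom_tail n x = n * binom_tail n (Suc x) + y * (n choose x)"
    unfolding 1 by (simp add: n_def algebra_simps)
  also have "\<dots> = n * (binom_tail N (Suc x) + binom_tail N x + (N choose x))" by (simp add: 2 3 algebra_simps)
  also have "\<dots> = 2 * n * binom_tail N x" using 4 by (simp add: algebra_simps)
  finally have "x * binom_tail n (Suc x) + y * binom_tail n x = 2 * n * binom_tail N x" .
  then show ?thesis using N unfolding n_def by (metis diff_Suc_1)
qed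

lemma sum_choose_Suc_mult:
  fixes g :: "nat \<Rightarrow> real"
  shows "(\<Sum>k\<le>Suc N. real (Suc N choose k) * g k) = (\<Sum>k\<le>N. real (N choose k) * (g k + g (Suc k)))"
proof -
  have A: "(\<Sum>k\<le>Suc N. real (N choose k) * g k) = g 0 + (\<Sum>j\<le>N. real (N choose Suc j) * g (Suc j))"
    by (subst sum.atMost_Suc_shift) simp
  have B: "(\<Sum>k\<le>Suc N. real (N choose k) * g k) = (\<Sum>k\<le>N. real (N choose k) * g k)"
    by simp
  have "(\<Sum>k\<le>Suc N. real (Suc N choose k) * g k) = g 0 + (\<Sum>j\<le>N. real (Suc N choose Suc j) * g (Suc j))"
    by (subst sum.atMost_Suc_shift) simp
  also have "\<dots> = g 0 + (\<Sum>j\<le>N. real (N choose j) * g (Suc j)) + (\<Sum>j\<le>N. real (N choose Suc j) * g (Suc j))"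
    by (simp add: sum.distrib algebra_simps)
  also have "\<dots> = (\<Sum>j\<le>N. real (N choose j) * g (Suc j)) + (\<Sum>k\<le>N. real (N choose k) * g k)"
    using A B by simp
  also have "\<dots> = (\<Sum>k\<le>N. real (N choose k) * (g k + g (Suc k)))"
    by (simp add: sum.distrib algebra_simps)
  finally show ?thesis .
qed

lemma sum_choose_square_deviation: "(\<Sum>k\<le>N. real (N choose k) * (2 * real k - real N)^2) = real N * 2 ^ N"
proof (induction N)
  case 0 then show ?case by simp
next
  case (Suc N)
  have "(\<Sum>k\<le>Suc N. real (Suc N choose k) * (2 * real k - real (Suc N))^2)
     = (\<Sum>k\<le>N. real (N choose k) * ((2 * real k - real (Suc N))^2 + (2 * real (Suc k) - real (Suc N))^2))"
    by (rule sum_choose_Suc_mult)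
  also have "\<dots> = (\<Sum>k\<le>N. 2 * (real (N choose k) * (2 * real k - real N)^2) + 2 * real (N choose k))"
    by (intro sum.cong refl) (simp add: power2_eq_square algebra_simps)
  also have "\<dots> = 2 * (real N * 2 ^ N) + 2 * 2 ^ N"
    by (simp add: sum.distrib sum_distrib_left[symmetric] Suc.IH of_nat_sum[symmetric] choose_row_sum)
  also have "\<dots> = real (Suc N) * 2 ^ Suc N" by (simp add: algebra_simps)
  finally show ?case .
qed

lemma binom_tail_chebyshev:
  assumes "N \<le> 2 * m"
  shows "real (binom_tail N m) * (2 * real m - real N)^2 \<le> real N * 2 ^ N"
proof -
  have "real (binom_tail N m) * (2 * real m - real N)^2 = (\<Sum>k\<in>{m..N}. real (N choose k) * (2 * real m - real N)^2)"
    by (simp add: binom_tail_def sum_distrib_right)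
  also have "\<dots> \<le> (\<Sum>k\<in>{m..N}. real (N choose k) * (2 * real k - real N)^2)"
    using assms by (intro sum_mono mult_left_mono power_mono) auto
  also have "\<dots> \<le> (\<Sum>k\<le>N. real (N choose k) * (2 * real k - real N)^2)"
    by (intro sum_mono2) auto
  finally show ?thesis by (simp add: sum_choose_square_deviation)
qed

definition tie_prob :: "nat \<times> nat \<Rightarrow> real" where
  "tie_prob z = 2 * real (binom_tail (fst z + snd z - 1) (max (fst z) (snd z))) / 2 ^ (fst z + snd z - 1)"

definition polya_op_real :: "(nat \<times> nat \<Rightarrow> real) \<Rightarrow> nat \<times> nat \<Rightarrow> real" where
  "polya_op_real g z = real (fst z) / (real (fst z) + real (snd z)) * g (fst z + 1, snd z)
     + real (snd z) / (real (fst z) + real (snd z)) * g (fst z, snd z + 1)"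

lemma polya_op_ennreal:
  assumes "\<And>z. g z \<ge> 0"
  shows "polya_op (\<lambda>z. ennreal (g z)) z = ennreal (polya_op_real g z)"
  unfolding polya_op_def polya_op_real_def using assms
  apply (subst ennreal_plus)
    apply (auto intro!: mult_nonneg_nonneg divide_nonneg_nonneg)[2]
  apply (subst (1 2) ennreal_mult)
      apply auto
  done

lemma tie_prob_nonneg: "tie_prob z \<ge> 0"
  by (simp add: tie_prob_def)

lemma tie_prob_le_2: "tie_prob z \<le> 2"
proof -
  have "real (binom_tail (fst z + snd z - 1) (max (fst z) (snd z))) \<le> real (2 ^ (fst z + snd z - 1))"
    using binom_tail_le_power by (simp only: of_nat_le_iff)
  then show ?thesis by (simp add: tie_prob_def divide_le_eq)
qed

lemma tie_prob_swap: "tie_prob (x, y) = tie_prob (y, x)"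
  by (simp add: tie_prob_def add.commute max.commute)

lemma tie_prob_harmonic_gt:
  assumes "y < x"
  shows "polya_op_real tie_prob (x, y) = tie_prob (x, y)"
proof -
  define n where "n = x + y"
  have n: "n \<ge> 1" "real x + real y = real n" using assms by (simp_all add: n_def)
  have pow: "(2::real) ^ n = 2 * 2 ^ (n - 1)" using n(1) by (metis Suc_diff_le diff_Suc_1 power_Suc)
  have tie_Suc_x: "tie_prob (Suc x, y) = 2 * real (binom_tail n (Suc x)) / 2 ^ n"
    using assms by (simp add: tie_prob_def n_def max_def)
  have "max x (Suc y) = x" using assms by simp
  then have tie_Suc_y: "tie_prob (x, Suc y) = 2 * real (binom_tail n x) / 2 ^ n"
    by (simp add: tie_prob_def n_def del: max_absorb1 max_absorb2)
  have tie_xy: "tie_prob (x, y) = 2 * real (binom_tail (n - 1) x) / 2 ^ (n - 1)"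
    using assms by (simp add: tie_prob_def n_def max_def)
  have harm: "real x * real (binom_tail n (Suc x)) + real y * real (binom_tail n x)
      = 2 * real n * real (binom_tail (n - 1) x)"
    using binom_tail_harmonic[OF assms] unfolding n_def by (metis of_nat_add of_nat_mult of_nat_numeral)
  have "polya_op_real tie_prob (x, y)
      = 2 * (real x * real (binom_tail n (Suc x)) + real y * real (binom_tail n x)) / (real n * 2 ^ n)"
    unfolding polya_op_real_def using n by (simp add: tie_Suc_x tie_Suc_y field_simps)
  also have "\<dots> = tie_prob (x, y)"
    using n unfolding harm tie_xy pow by simp
  finally show ?thesis .
qed

lemma tie_prob_harmonic: assumes "x \<noteq> y" shows "polya_op_real tie_prob (x, y) = tie_prob (x, y)"
proof (cases "y < x")
  case True then show ?thesis by (rule tie_prob_harmonic_gt)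
next
  case False
  then have "x < y" using assms by simp
  then have "polya_op_real tie_prob (y, x) = tie_prob (y, x)" by (rule tie_prob_harmonic_gt)
  then show ?thesis by (simp add: polya_op_real_def tie_prob_swap add.commute)
qed

lemma tie_prob_diag: assumes "k \<ge> 1" shows "tie_prob (k, k) = 1"
proof -
  define N where "N = 2 * k - 1"
  have kN: "k \<le> Suc N" "Suc N - k = k" using assms by (auto simp: N_def)
  have "2 ^ N = (\<Sum>j<k. N choose j) + binom_tail N k" by (rule binom_tail_complement[OF kN(1)])
  also have "(\<Sum>j<k. N choose j) = binom_tail N k" using sum_lessThan_choose_eq_binom_tail[OF kN(1)] kN(2) by simp
  finally have "real (2 ^ N) = 2 * real (binom_tail N k)" by simp
  moreover have "2 * k - 1 = N" by (simp add: N_def)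
  moreover have "real (binom_tail N k) > 0" using calculation(1)
    by (metis mult_pos_pos of_nat_0_less_iff zero_less_numeral zero_less_power zero_less_mult_pos)
  ultimately show ?thesis by (simp add: tie_prob_def mult_2[symmetric])
qed

definition cbinom :: "nat \<Rightarrow> real" where "cbinom k = real ((2*k) choose k) / 4 ^ k"

lemma polya_op_real_tie_prob_diag: assumes "k \<ge> 1" shows "polya_op_real tie_prob (k, k) = 1 - cbinom k"
proof -
  define N where "N = 2 * k"
  have "2 ^ N = (\<Sum>j<Suc k. N choose j) + binom_tail N (Suc k)" by (rule binom_tail_complement) (simp add: N_def)
  also have "(\<Sum>j<Suc k. N choose j) = (\<Sum>j<k. N choose j) + (N choose k)" by simp
  also have "(\<Sum>j<k. N choose j) = binom_tail N (Suc k)" using sum_lessThan_choose_eq_binom_tail[of k N] by (simp add: N_def)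
  finally have e: "real (2 ^ N) = 2 * real (binom_tail N (Suc k)) + real (N choose k)" by simp
  have "(4::real) ^ k = 2 ^ N" by (simp add: N_def power_mult)
  have f1: "tie_prob (Suc k, k) = 2 * real (binom_tail N (Suc k)) / 2 ^ N"
  proof -
    have "Suc k + k - 1 = N" "max (Suc k) k = Suc k" by (auto simp: N_def)
    then show ?thesis unfolding tie_prob_def fst_conv snd_conv by metis
  qed
  have kk: "real k / (real k + real k) = 1/2" using assms by (simp add: field_simps)
  have "polya_op_real tie_prob (k, k) = tie_prob (Suc k, k)"
  proof -
    have "polya_op_real tie_prob (k, k) = 1/2 * tie_prob (Suc k, k) + 1/2 * tie_prob (k, Suc k)"
      unfolding polya_op_real_def fst_conv snd_conv kk by simp
    then show ?thesis using tie_prob_swap[of k "Suc k"] by simp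
  qed
  then have "polya_op_real tie_prob (k, k) = 2 * real (binom_tail N (Suc k)) / 2 ^ N" using f1 by simp
  also have "\<dots> = 1 - cbinom k"
  proof -
    have e': "(2::real) ^ N = 2 * real (binom_tail N (Suc k)) + real (N choose k)" using e by simp
    have "1 - cbinom k = (2 ^ N - real (N choose k)) / 2 ^ N"
      unfolding cbinom_def \<open>(4::real) ^ k = 2 ^ N\<close> N_def[symmetric] by (simp add: diff_divide_distrib)
    then show ?thesis using e' by simp
  qed
  finally show ?thesis .
qed

lemma tie_prob_chebyshev:
  assumes "X + Y \<ge> 1"
  shows "tie_prob (X, Y) * (\<bar>real X - real Y\<bar> + 1)^2 \<le> 2 * (real X + real Y)"
proof -
  define N where "N = X + Y - 1"
  define m where "m = max X Y"
  have Nm: "N \<le> 2 * m" using assms by (simp add: N_def m_def)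
  have d: "2 * real m - real N = \<bar>real X - real Y\<bar> + 1" using assms by (simp add: N_def m_def max_def)
  have c: "real (binom_tail N m) * (\<bar>real X - real Y\<bar> + 1)^2 \<le> real N * 2 ^ N" using binom_tail_chebyshev[OF Nm] d by simp
  have "tie_prob (X, Y) * (\<bar>real X - real Y\<bar> + 1)^2 = 2 * (real (binom_tail N m) * (\<bar>real X - real Y\<bar> + 1)^2) / 2 ^ N"
    by (simp add: tie_prob_def N_def m_def)
  also have "\<dots> \<le> 2 * (real N * 2 ^ N) / 2 ^ N"
    using c by (intro divide_right_mono mult_left_mono) auto
  also have "\<dots> = 2 * real N" by simp
  also have "\<dots> \<le> 2 * (real X + real Y)" by (simp add: N_def)
  finally show ?thesis .
qed

section \<open>The tail of the last tie\<close>

abbreviation tie :: "nat \<times> nat \<Rightarrow> bool" where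
  "tie z \<equiv> fst z = snd z"

definition tail_prob :: "nat \<Rightarrow> nat \<Rightarrow> nat \<Rightarrow> real" where
  "tail_prob x y m = (\<Sum>a\<le>m. polya_weight x y m a * tie_prob (x + a, y + (m - a)))"

lemma tail_prob_nonneg: "tail_prob x y t \<ge> 0"
  unfolding tail_prob_def by (intro sum_nonneg) (auto simp: polya_weight_nonneg tie_prob_nonneg)

lemma path_mean_tie_prob:
  "x + y > 0 \<Longrightarrow> path_mean (\<lambda>z. ennreal (tie_prob z)) (x, y) m = ennreal (tail_prob x y m)"
  unfolding path_mean_eq_sum tail_prob_def
  by (subst sum_ennreal[symmetric]) (auto simp: ennreal_mult polya_weight_nonneg tie_prob_nonneg)

lemma card_even_offset_le:
  fixes c :: int
  shows "card {a\<in>{..m::nat}. \<bar>2 * int a - c\<bar> \<le> int K} \<le> 2 * K + 1"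
proof -
  let ?A = "{a\<in>{..m::nat}. \<bar>2 * int a - c\<bar> \<le> int K}"
  let ?h = "\<lambda>a. nat (2 * int a - c + int K)"
  have "inj_on ?h ?A" by (rule inj_onI) auto
  moreover have "?h ` ?A \<subseteq> {0..2*K}" by auto
  ultimately have "card ?A \<le> card {0..2*K}" by (intro card_inj_on_le) auto
  then show ?thesis by simp
qed

lemma tie_prob_le_off_diagonal:
  assumes "X + Y \<ge> 1" and "\<bar>real X - real Y\<bar> \<ge> real K + 1"
  shows "tie_prob (X, Y) \<le> 2 * (real X + real Y) / (real K + 1)^2"
proof -
  have "tie_prob (X, Y) * (real K + 1)^2 \<le> tie_prob (X, Y) * (\<bar>real X - real Y\<bar> + 1)^2"
    using assms(2) by (intro mult_left_mono power_mono) (auto simp: tie_prob_nonneg)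
  also have "\<dots> \<le> 2 * (real X + real Y)" using assms(1) by (rule tie_prob_chebyshev)
  finally show ?thesis by (simp add: le_divide_eq add_pos_nonneg)
qed

lemma polya_weight_mult_tie_prob_le:
  assumes "x \<ge> 1" "y \<ge> 1" "a \<le> m"
  shows "polya_weight x y m a * tie_prob (x + a, y + (m - a)) \<le> 2 * beta_coeff x y / (real m + 1)"
proof -
  have "polya_weight x y m a * tie_prob (x + a, y + (m - a)) \<le> beta_coeff x y / (real m + 1) * 2"
    by (intro mult_mono polya_weight_le assms tie_prob_le_2)
       (auto simp: polya_weight_nonneg tie_prob_nonneg beta_coeff_def)
  then show ?thesis by (simp add: mult.commute)
qed

text \<open>At time m, at most 2K + 1 of the m + 1 positions lie within distance K of the
  diagonal, each carrying Polya weight O(1/m); elsewhere tie_prob is O(m/K^2).\<close>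
lemma tail_prob_le:
  assumes x: "x \<ge> 1" and y: "y \<ge> 1"
  shows "tail_prob x y m \<le> 2 * (2 * real K + 1) * beta_coeff x y / (real m + 1)
           + 2 * (real x + real y + real m) / (real K + 1)^2"
proof -
  define c :: int where "c = int y + int m - int x"
  define A where "A = {a\<in>{..m::nat}. \<bar>2 * int a - c\<bar> \<le> int K}"
  define n :: real where "n = real x + real y + real m"
  have term_le: "polya_weight x y m a * tie_prob (x + a, y + (m - a))
      \<le> (if a \<in> A then 2 * beta_coeff x y / (real m + 1) else 0) + polya_weight x y m a * (2 * n / (real K + 1)^2)"
    if a: "a \<le> m" for a
  proof (cases "a \<in> A")
    case True
    have "0 \<le> polya_weight x y m a * (2 * n / (real K + 1)^2)"
      by (simp add: polya_weight_nonneg n_def)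
    with True polya_weight_mult_tie_prob_le[OF x y a] show ?thesis by simp
  next
    case False
    then have "int K + 1 \<le> \<bar>2 * int a - c\<bar>" using a by (simp add: A_def)
    then have "\<bar>real (x + a) - real (y + (m - a))\<bar> \<ge> real K + 1"
      using a by (simp add: c_def of_nat_diff)
    then have "tie_prob (x + a, y + (m - a)) \<le> 2 * n / (real K + 1)^2"
      using tie_prob_le_off_diagonal[of "x + a" "y + (m - a)" K] x a by (simp add: n_def algebra_simps)
    then have "polya_weight x y m a * tie_prob (x + a, y + (m - a))
        \<le> polya_weight x y m a * (2 * n / (real K + 1)^2)"
      by (rule mult_left_mono) (rule polya_weight_nonneg)
    with False show ?thesis by simp
  qed
  have "tail_prob x y m \<le> (\<Sum>a\<le>m. (if a \<in> A then 2 * beta_coeff x y / (real m + 1) else 0)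
      + polya_weight x y m a * (2 * n / (real K + 1)^2))"
    unfolding tail_prob_def by (intro sum_mono term_le) auto
  also have "\<dots> = real (card A) * (2 * beta_coeff x y / (real m + 1)) + 2 * n / (real K + 1)^2"
  proof -
    have "{..m} \<inter> A = A" by (auto simp: A_def)
    moreover have "(\<Sum>a\<le>m. polya_weight x y m a * (2 * n / (real K + 1)^2)) = 2 * n / (real K + 1)^2"
      using sum_polya_weight[of x y m] x by (simp add: sum_distrib_right[symmetric] del: times_divide_eq_right)
    ultimately show ?thesis by (simp add: sum.distrib sum.If_cases)
  qed
  also have "\<dots> \<le> real (2 * K + 1) * (2 * beta_coeff x y / (real m + 1)) + 2 * n / (real K + 1)^2"
    using card_even_offset_le[of m c K] unfolding A_def[symmetric]
    by (intro add_right_mono mult_right_mono) (auto simp: beta_coeff_def)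
  finally show ?thesis by (simp add: n_def algebra_simps)
qed

lemma tail_prob_small:
  assumes x: "x \<ge> 1" and y: "y \<ge> 1" and e: "e > 0"
  shows "\<exists>m. tail_prob x y m \<le> e"
proof -
  define C where "C = beta_coeff x y"
  define s where "s = real x + real y"
  have "(\<lambda>j::nat. 2 * (2 * (real j)^2 + 1) * C / (real j ^ 3 + 1) + 2 * (s + real j ^ 3) / ((real j)^2 + 1)^2)
      \<longlonglongrightarrow> 0"
    by real_asymp
  then have "\<forall>\<^sub>F j in sequentially.
      2 * (2 * (real j)^2 + 1) * C / (real j ^ 3 + 1) + 2 * (s + real j ^ 3) / ((real j)^2 + 1)^2 < e"
    using e by (rule order_tendstoD(2))
  then obtain j where j:
    "2 * (2 * (real j)^2 + 1) * C / (real j ^ 3 + 1) + 2 * (s + real j ^ 3) / ((real j)^2 + 1)^2 < e"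
    by (auto simp: eventually_sequentially)
  have "tail_prob x y (j^3) \<le> 2 * (2 * real (j^2) + 1) * C / (real (j^3) + 1)
      + 2 * (s + real (j^3)) / (real (j^2) + 1)^2"
    using tail_prob_le[OF x y, of "j^3" "j^2"] by (simp add: C_def s_def algebra_simps)
  with j show ?thesis by (intro exI[of _ "j^3"]) simp
qed

lemma cbinom_bounds: "0 \<le> cbinom k" "cbinom k \<le> 1"
proof -
  show "0 \<le> cbinom k" by (simp add: cbinom_def)
  have "(2*k) choose k \<le> (\<Sum>j\<le>2*k. (2*k) choose j)" by (rule member_le_sum) auto
  then have "(2*k) choose k \<le> 2 ^ (2*k)" by (simp add: choose_row_sum)
  then have "real ((2*k) choose k) \<le> real (2 ^ (2*k))" by (simp only: of_nat_le_iff)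
  then have "real ((2*k) choose k) \<le> 4 ^ k" by (simp add: power_mult)
  then show "cbinom k \<le> 1" by (simp add: cbinom_def)
qed

text \<open>The failure of tie_prob to be harmonic: on the diagonal it equals 1, but its mean after
  one step is only 1 - cbinom k.\<close>
definition tie_defect :: "nat \<times> nat \<Rightarrow> ennreal" where
  "tie_defect z = ennreal (if tie z then cbinom (fst z) else 0)"

lemma tie_prob_split:
  assumes "fst z \<ge> 1" "snd z \<ge> 1"
  shows "ennreal (tie_prob z) = polya_op (\<lambda>z. ennreal (tie_prob z)) z + tie_defect z"
proof -
  obtain x y where z: "z = (x, y)" by (cases z)
  have op: "polya_op (\<lambda>z. ennreal (tie_prob z)) (x, y) = ennreal (polya_op_real tie_prob (x, y))"
    by (rule polya_op_ennreal) (rule tie_prob_nonneg)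
  show ?thesis
    unfolding z
  proof (cases "x = y")
    case False
    then show "ennreal (tie_prob (x, y)) = polya_op (\<lambda>z. ennreal (tie_prob z)) (x, y) + tie_defect (x, y)"
      using tie_prob_harmonic[of x y] by (simp add: op tie_defect_def)
  next
    case True
    have k: "x \<ge> 1" using assms z by simp
    have "polya_op (\<lambda>z. ennreal (tie_prob z)) (x, y) + tie_defect (x, y)
        = ennreal (1 - cbinom x) + ennreal (cbinom x)"
      using polya_op_real_tie_prob_diag[OF k] op True by (simp add: tie_defect_def)
    also have "\<dots> = 1" using cbinom_bounds[of x] by (subst ennreal_plus[symmetric]) auto
    finally show "ennreal (tie_prob (x, y)) = polya_op (\<lambda>z. ennreal (tie_prob z)) (x, y) + tie_defect (x, y)"
      using tie_prob_diag[OF k] by (simp add: True)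
  qed
qed

lemma path_mean_cong_quadrant:
  assumes "x \<ge> 1" "y \<ge> 1" and "\<And>z. fst z \<ge> 1 \<Longrightarrow> snd z \<ge> 1 \<Longrightarrow> \<phi> z = \<psi> z"
  shows "path_mean \<phi> (x, y) t = path_mean \<psi> (x, y) t"
  using assms by (simp add: path_mean_eq_sum)

lemma path_mean_tie_prob_Suc:
  assumes x: "x \<ge> 1" and y: "y \<ge> 1"
  shows "path_mean (\<lambda>z. ennreal (tie_prob z)) (x, y) t
       = path_mean (\<lambda>z. ennreal (tie_prob z)) (x, y) (Suc t) + path_mean tie_defect (x, y) t"
proof -
  let ?F = "\<lambda>z. ennreal (tie_prob z)"
  have "path_mean ?F (x, y) t = path_mean (\<lambda>z. polya_op ?F z + tie_defect z) (x, y) t"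
    using x y by (rule path_mean_cong_quadrant) (rule tie_prob_split)
  also have "\<dots> = path_mean (polya_op ?F) (x, y) t + path_mean tie_defect (x, y) t"
    by (rule path_mean_add)
  also have "path_mean (polya_op ?F) (x, y) t = path_mean ?F (x, y) (Suc t)"
    using x by (simp add: path_mean_Suc')
  finally show ?thesis .
qed

lemma hit_prob_tie:
  assumes "x \<ge> 1" "y \<ge> 1"
  shows "hit_prob tie (x, y) t = path_mean (\<lambda>z. ennreal (tie_prob z)) (x, y) t"
proof (rule hit_prob_eq_path_mean)
  fix z :: "nat \<times> nat"
  assume "1 \<le> fst z" "1 \<le> snd z" "\<not> tie z"
  then show "polya_op (\<lambda>z. ennreal (tie_prob z)) z = ennreal (tie_prob z)"
    using tie_prob_split[of z] by (simp add: tie_defect_def)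
next
  fix z :: "nat \<times> nat"
  assume "1 \<le> fst z" "1 \<le> snd z" "tie z"
  then show "ennreal (tie_prob z) = 1" using tie_prob_diag[of "fst z"] by (cases z) simp
next
  fix z :: "nat \<times> nat" and e :: real
  assume z: "1 \<le> fst z" "1 \<le> snd z" and "e > 0"
  then obtain m where "tail_prob (fst z) (snd z) m \<le> e" using tail_prob_small by blast
  then show "\<exists>m. path_mean (\<lambda>z. ennreal (tie_prob z)) z m \<le> ennreal e"
    using path_mean_tie_prob[of "fst z" "snd z" m] z by (intro exI[of _ m]) (simp add: ennreal_leI)
qed (use assms in simp_all)

definition tail_drop :: "nat \<Rightarrow> nat \<Rightarrow> nat \<Rightarrow> real" where
  "tail_drop x y t = (\<Sum>a\<le>t. polya_weight x y t a * (if x + a = y + (t - a) then cbinom (x + a) else 0))"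

lemma tail_drop_nonneg: "tail_drop x y t \<ge> 0"
  unfolding tail_drop_def by (intro sum_nonneg) (auto simp: polya_weight_nonneg cbinom_bounds)

lemma path_mean_tie_defect: "x + y > 0 \<Longrightarrow> path_mean tie_defect (x, y) t = ennreal (tail_drop x y t)"
proof -
  have "tie_defect (a, b) = ennreal (if a = b then cbinom a else 0)" for a b
    by (simp add: tie_defect_def)
  moreover assume "x + y > 0"
  ultimately show ?thesis
    unfolding path_mean_eq_sum[OF \<open>x + y > 0\<close>] tail_drop_def
    by (subst sum_ennreal[symmetric]) (auto simp: ennreal_mult polya_weight_nonneg cbinom_bounds)
qed

lemma tail_prob_Suc:
  assumes x: "x \<ge> 1" and y: "y \<ge> 1"
  shows "tail_prob x y t = tail_prob x y (Suc t) + tail_drop x y t"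
proof -
  have p: "x + y > 0" using x by simp
  have "ennreal (tail_prob x y t) = ennreal (tail_prob x y (Suc t)) + ennreal (tail_drop x y t)"
    using path_mean_tie_prob_Suc[OF x y, of t] by (simp add: path_mean_tie_prob[OF p] path_mean_tie_defect[OF p])
  also have "\<dots> = ennreal (tail_prob x y (Suc t) + tail_drop x y t)"
    by (simp add: tail_prob_nonneg tail_drop_nonneg ennreal_plus)
  finally show ?thesis
    by (subst (asm) ennreal_inj) (auto simp: tail_prob_nonneg tail_drop_nonneg add_nonneg_nonneg)
qed

lemma tail_prob_tendsto_0:
  assumes x: "x \<ge> 1" and y: "y \<ge> 1"
  shows "tail_prob x y \<longlonglongrightarrow> 0"
proof (rule decreasing_tendsto)
  show "\<forall>\<^sub>F n in sequentially. 0 \<le> tail_prob x y n" by (simp add: tail_prob_nonneg)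
next
  have dec: "decseq (tail_prob x y)"
    by (rule decseq_SucI) (metis tail_prob_Suc[OF x y] tail_drop_nonneg le_add_same_cancel1)
  fix e :: real
  assume "0 < e"
  moreover obtain m where "tail_prob x y m \<le> e / 2"
    using tail_prob_small[OF x y, of "e / 2"] \<open>0 < e\<close> by auto
  ultimately have "tail_prob x y m < e" by linarith
  then show "\<forall>\<^sub>F n in sequentially. tail_prob x y n < e"
    unfolding eventually_sequentially using dec by (auto dest: decseqD intro: le_less_trans)
qed

lemma ereal_le_Sup_nat_iff: "ereal (real t) \<le> Sup {ereal (real s) | s. P s} \<longleftrightarrow> (\<exists>s\<ge>t. P s)"
proof
  assume le: "ereal (real t) \<le> Sup {ereal (real s) | s. P s}"
  show "\<exists>s\<ge>t. P s"
  proof (rule ccontr)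
    assume "\<not> (\<exists>s\<ge>t. P s)"
    then have "real s \<le> real t - 1" if "P s" for s
      using that of_nat_le_iff[of "Suc s" t] by (auto simp: not_le Suc_le_eq)
    then have "Sup {ereal (real s) | s. P s} \<le> ereal (real t - 1)"
      by (intro Sup_least) auto
    with le have "ereal (real t) \<le> ereal (real t - 1)" by (rule order_trans)
    then show False by simp
  qed
qed (auto intro: Sup_upper2)

lemma measure_last_tie_ge:
  assumes "x0 \<ge> 1" "y0 \<ge> 1"
  shows "measure ca_space {\<omega> \<in> space ca_space. last_tie 1 x0 y0 \<omega> \<ge> ereal (real t)} = tail_prob x0 y0 t"
proof -
  have "emeasure ca_space {\<omega> \<in> space ca_space. last_tie 1 x0 y0 \<omega> \<ge> ereal (real t)}
      = hit_prob tie (x0, y0) t"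
    by (simp add: hit_prob_def last_tie_def polya_path_def ereal_le_Sup_nat_iff)
  also have "\<dots> = ennreal (tail_prob x0 y0 t)"
    using assms by (simp add: hit_prob_tie path_mean_tie_prob)
  finally show ?thesis by (simp add: measure_def tail_prob_nonneg)
qed

section \<open>Asymptotics\<close>

lemma cbinom_pochhammer: "cbinom k = pochhammer (1/2) k / fact k"
proof -
  have "real ((2 * k) choose k) = fact (2 * k) / (fact k * fact k)"
    using binomial_fact[of k "2 * k"] by simp
  also have "(fact (2 * k) :: real) = 4 ^ k * pochhammer (1/2) k * fact k"
    using fact_double[of k] by (simp add: power_mult)
  finally show ?thesis by (simp add: cbinom_def)
qed

lemma cbinom_asymp: "(\<lambda>k. cbinom k * sqrt (real k)) \<longlonglongrightarrow> 1 / sqrt pi"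
proof -
  have lim: "(\<lambda>k. ((-1/2 + of_nat k) gchoose k) * exp (- (-1/2) * of_real (ln (of_nat k))))
      \<longlonglongrightarrow> rGamma (-1/2 + 1 :: real)"
    by (rule Gamma_gbinomial)
  have ev: "\<forall>\<^sub>F k in sequentially.
      ((-1/2 + of_nat k) gchoose k) * exp (- (-1/2) * of_real (ln (of_nat k))) = cbinom k * sqrt (real k)"
    using eventually_gt_at_top[of 0]
  proof eventually_elim
    case (elim k)
    have "sqrt (real k) = real k powr (1/2)" by (simp add: powr_half_sqrt)
    also have "\<dots> = exp (- (-1/2) * ln (real k))" using elim by (simp add: powr_def)
    finally have "exp (- (-1/2) * ln (real k)) = sqrt (real k)" ..
    moreover have "(-1/2 + real k) gchoose k = cbinom k"
      by (simp add: gbinomial_pochhammer' cbinom_pochhammer)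
    ultimately show ?case by simp
  qed
  have "(-1/2 + 1 :: real) = 1/2" by simp
  then have "rGamma (-1/2 + 1 :: real) = 1 / sqrt pi"
    by (simp only: rGamma_inverse_Gamma Gamma_one_half_real inverse_eq_divide)
  with Lim_transform_eventually[OF lim ev] show ?thesis by simp
qed

definition binom_ratio :: "nat \<Rightarrow> nat \<Rightarrow> nat \<Rightarrow> real" where
  "binom_ratio x y k = real ((2 * k - x - y) choose (k - x)) / real ((2 * k) choose k)"

lemma binom_ratio_swap:
  assumes "x \<le> k" "y \<le> k"
  shows "binom_ratio x y k = binom_ratio y x k"
proof -
  have "k - x \<le> 2 * k - x - y" "2 * k - x - y - (k - x) = k - y" "2 * k - y - x = 2 * k - x - y"
    using assms by auto
  then show ?thesis unfolding binom_ratio_def by (simp add: binomial_symmetric[of "k - x"])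
qed

lemma binom_ratio_Suc_left:
  assumes "k > x + y"
  shows "binom_ratio (Suc x) y k = binom_ratio x y k * ((real k - real x) / (2 * real k - real x - real y))"
proof -
  define N j where "N = 2 * k - Suc x - y" and "j = k - Suc x"
  have NN: "2 * k - x - y = Suc N" "k - x = Suc j" using assms by (auto simp: N_def j_def)
  have r: "real (Suc N) = 2 * real k - real x - real y" "real (Suc j) = real k - real x"
    using assms by (auto simp: N_def j_def of_nat_diff)
  have "real (Suc j) * real (Suc N choose Suc j) = real (Suc N) * real (N choose j)"
    by (simp only: of_nat_mult[symmetric] Suc_times_binomial)
  then have "real (N choose j) = real (Suc N choose Suc j) * real (Suc j) / real (Suc N)"
    by (simp add: field_simps del: binomial_Suc_Suc)
  then show ?thesis
    unfolding binom_ratio_def NN N_def[symmetric] j_def[symmetric] r[symmetric]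
    by (simp add: divide_inverse mult_ac del: binomial_Suc_Suc)
qed

lemma binom_ratio_limit: "binom_ratio x y \<longlonglongrightarrow> 1 / 2 ^ (x + y)"
proof -
  have Suc_left: "binom_ratio (Suc x) y \<longlonglongrightarrow> 1 / 2 ^ (Suc x + y)"
    if "binom_ratio x y \<longlonglongrightarrow> 1 / 2 ^ (x + y)" for x y
  proof -
    have "(\<lambda>k::nat. (real k - real x) / (2 * real k - real x - real y)) \<longlonglongrightarrow> 1/2"
      by real_asymp
    with that have "(\<lambda>k. binom_ratio x y k * ((real k - real x) / (2 * real k - real x - real y)))
        \<longlonglongrightarrow> 1 / 2 ^ (Suc x + y)"
      using tendsto_mult by fastforce
    moreover have "\<forall>\<^sub>F k in sequentially.
        binom_ratio x y k * ((real k - real x) / (2 * real k - real x - real y)) = binom_ratio (Suc x) y k"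
      using eventually_gt_at_top[of "x + y"] by eventually_elim (simp add: binom_ratio_Suc_left)
    ultimately show ?thesis by (rule Lim_transform_eventually)
  qed
  have swap: "binom_ratio y x \<longlonglongrightarrow> l" if "binom_ratio x y \<longlonglongrightarrow> l" for x y l
  proof -
    have "\<forall>\<^sub>F k in sequentially. binom_ratio x y k = binom_ratio y x k"
      using eventually_ge_at_top[of "x + y"] by eventually_elim (simp add: binom_ratio_swap)
    with that show ?thesis by (rule Lim_transform_eventually)
  qed
  have "binom_ratio x 0 \<longlonglongrightarrow> 1 / 2 ^ x" for x
  proof (induction x)
    case 0
    then show ?case by (simp add: binom_ratio_def)
  next
    case (Suc x)
    then show ?case using Suc_left[of x 0] by simp
  qed
  then have base: "binom_ratio 0 y \<longlonglongrightarrow> 1 / 2 ^ y" for y using swap by simp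
  show ?thesis
  proof (induction x)
    case 0
    show ?case using base by simp
  next
    case (Suc x)
    then show ?case by (rule Suc_left)
  qed
qed

lemma tail_drop_odd: assumes "odd (t + x + y)" shows "tail_drop x y t = 0"
  unfolding tail_drop_def
proof (rule sum.neutral, intro ballI)
  fix a
  assume a: "a \<in> {..t}"
  have "x + a \<noteq> y + (t - a)"
  proof
    assume "x + a = y + (t - a)"
    then have "t + x + y = 2 * (x + a)" using a by auto
    then show False using assms by presburger
  qed
  then show "polya_weight x y t a * (if x + a = y + (t - a) then cbinom (x + a) else 0) = 0" by simp
qed

lemma tail_drop_even:
  assumes "k \<ge> x" "k \<ge> y"
  shows "tail_drop x y (2 * k - x - y) = polya_weight x y (2 * k - x - y) (k - x) * cbinom k"
proof -
  define t where "t = 2 * k - x - y"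
  have "x + a = y + (t - a) \<longleftrightarrow> a = k - x" if "a \<le> t" for a
    using that assms by (auto simp: t_def)
  then have "tail_drop x y t = (\<Sum>a\<le>t. if a = k - x then polya_weight x y t a * cbinom k else 0)"
    unfolding tail_drop_def by (intro sum.cong) (auto simp: assms)
  also have "\<dots> = polya_weight x y t (k - x) * cbinom k" using assms by (simp add: t_def)
  finally show ?thesis by (simp add: t_def)
qed

definition diag_drop :: "nat \<Rightarrow> nat \<Rightarrow> nat \<Rightarrow> real" where
  "diag_drop x y k = tail_drop x y (2 * k - x - y)"

lemma diag_drop_eq:
  assumes x: "x \<ge> 1" and y: "y \<ge> 1" and k: "k \<ge> x" "k \<ge> y"
  shows "diag_drop x y k = 2 * beta_coeff x y / real k * binom_ratio x y k * cbinom k"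
proof -
  define t a where "t = 2 * k - x - y" and "a = k - x"
  define F1 F2 :: real where "F1 = fact (k - 1)" and "F2 = fact (2 * k - 1)"
  have k1: "k \<ge> 1" using k x by simp
  have "x + a - 1 = k - 1" "y + (t - a) - 1 = k - 1" "x + y + t - 1 = 2 * k - 1" "a \<le> t"
    using k x y by (auto simp: t_def a_def)
  then have "polya_weight x y t a = beta_coeff x y * (fact t / (fact a * fact (t - a))) * (F1 * F1 / F2)"
    using polya_weight_fact[OF x y, of a t] by (simp add: F1_def F2_def)
  also have "fact t / (fact a * fact (t - a)) = real (t choose a)"
    using \<open>a \<le> t\<close> by (simp add: binomial_fact)
  finally have w: "polya_weight x y t a = beta_coeff x y * real (t choose a) * (F1 * F1 / F2)" .
  have "(fact k :: real) = real k * F1" "(fact (2 * k) :: real) = 2 * real k * F2"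
    using k1 by (simp_all add: F1_def F2_def fact_reduce)
  then have c: "cbinom k = 2 * real k * F2 / (real k * F1 * (real k * F1)) / 4 ^ k"
    by (simp add: cbinom_def binomial_fact)
  have "diag_drop x y k = polya_weight x y t a * cbinom k"
    unfolding diag_drop_def t_def a_def using tail_drop_even[OF k] by simp
  also have "\<dots> = 2 * beta_coeff x y / real k * (real (t choose a) / 4 ^ k)"
    unfolding w c using k1 by (simp add: F1_def F2_def field_simps)
  also have "real (t choose a) / 4 ^ k = binom_ratio x y k * cbinom k"
    by (simp add: binom_ratio_def cbinom_def t_def a_def)
  finally show ?thesis by simp
qed

definition tail_const :: "nat \<Rightarrow> nat \<Rightarrow> real" where
  "tail_const x y = 2 * beta_coeff x y / 2 ^ (x + y) / sqrt pi"

lemma tail_const_pos: "tail_const x y > 0"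
  by (simp add: tail_const_def beta_coeff_pos)

lemma diag_drop_limit:
  assumes x: "x \<ge> 1" and y: "y \<ge> 1"
  shows "(\<lambda>k. diag_drop x y k * real k powr (3/2)) \<longlonglongrightarrow> tail_const x y"
proof -
  have "(\<lambda>k. 2 * beta_coeff x y * binom_ratio x y k * (cbinom k * sqrt (real k)))
      \<longlonglongrightarrow> 2 * beta_coeff x y * (1 / 2 ^ (x + y)) * (1 / sqrt pi)"
    by (intro tendsto_mult tendsto_const binom_ratio_limit cbinom_asymp)
  moreover have "\<forall>\<^sub>F k in sequentially.
      2 * beta_coeff x y * binom_ratio x y k * (cbinom k * sqrt (real k)) = diag_drop x y k * real k powr (3/2)"
    using eventually_ge_at_top[of "max x y"]
  proof eventually_elim
    case (elim k)
    then have k: "k \<ge> x" "k \<ge> y" by auto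
    have "real k powr (3/2) = real k * sqrt (real k)"
      using powr_add[of "real k" 1 "1/2"] k x by (simp add: powr_half_sqrt)
    then show ?case using k x by (simp add: diag_drop_eq[OF x y k] field_simps)
  qed
  ultimately show ?thesis by (simp add: tail_const_def Lim_transform_eventually)
qed

lemma telescoping_abs_diff_le:
  fixes T E \<phi> :: "nat \<Rightarrow> real"
  assumes rec: "\<And>j. j \<ge> k \<Longrightarrow> T j = T (Suc j) + E j"
    and close: "\<And>j. j \<ge> k \<Longrightarrow> \<bar>E j - (\<phi> j - \<phi> (Suc j))\<bar> \<le> c * (\<phi> j - \<phi> (Suc j))"
  shows "\<bar>(T k - T (k + n)) - (\<phi> k - \<phi> (k + n))\<bar> \<le> c * (\<phi> k - \<phi> (k + n))"
proof (induction n)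
  case 0
  then show ?case by simp
next
  case (Suc n)
  let ?A = "(T k - T (k + n)) - (\<phi> k - \<phi> (k + n))"
  let ?B = "E (k + n) - (\<phi> (k + n) - \<phi> (k + Suc n))"
  have "(T k - T (k + Suc n)) - (\<phi> k - \<phi> (k + Suc n)) = ?A + ?B"
    using rec[of "k + n"] by simp
  also have "\<bar>?A + ?B\<bar> \<le> \<bar>?A\<bar> + \<bar>?B\<bar>" by (rule abs_triangle_ineq)
  also have "\<dots> \<le> c * (\<phi> k - \<phi> (k + n)) + c * (\<phi> (k + n) - \<phi> (k + Suc n))"
    using Suc.IH close[of "k + n"] by (intro add_mono) simp_all
  also have "\<dots> = c * (\<phi> k - \<phi> (k + Suc n))" by (simp add: algebra_simps)
  finally show ?case .
qed

text \<open>A Stolz--Cesaro theorem for null sequences.\<close>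
lemma telescoping_asymp_equiv:
  fixes T E \<phi> :: "nat \<Rightarrow> real"
  assumes rec: "\<forall>\<^sub>F k in sequentially. T k = T (Suc k) + E k"
    and E: "E \<sim>[sequentially] (\<lambda>k. \<phi> k - \<phi> (Suc k))"
    and mono: "\<forall>\<^sub>F k in sequentially. \<phi> (Suc k) \<le> \<phi> k"
    and T0: "T \<longlonglongrightarrow> 0" and \<phi>0: "\<phi> \<longlonglongrightarrow> 0"
  shows "T \<sim>[sequentially] \<phi>"
  unfolding asymp_equiv_altdef
proof (rule landau_o.smallI)
  fix c :: real
  assume c: "c > 0"
  let ?b = "\<lambda>k. \<phi> k - \<phi> (Suc k)"
  have "(\<lambda>k. E k - ?b k) \<in> o(?b)" using E by (simp add: asymp_equiv_altdef)
  from landau_o.smallD[OF this c] rec mono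
  have "\<forall>\<^sub>F k in sequentially. T k = T (Suc k) + E k \<and> \<bar>E k - ?b k\<bar> \<le> c * ?b k"
    by eventually_elim auto
  then obtain N where N: "\<And>j. j \<ge> N \<Longrightarrow> T j = T (Suc j) + E j \<and> \<bar>E j - ?b j\<bar> \<le> c * ?b j"
    by (auto simp: eventually_sequentially)
  have bound: "\<bar>T k - \<phi> k\<bar> \<le> c * \<phi> k" if k: "k \<ge> N" for k
  proof (rule LIMSEQ_le)
    have lim: "(\<lambda>n. T (k + n)) \<longlonglongrightarrow> 0" "(\<lambda>n. \<phi> (k + n)) \<longlonglongrightarrow> 0"
      using LIMSEQ_ignore_initial_segment[OF T0, of k] LIMSEQ_ignore_initial_segment[OF \<phi>0, of k]
      by (simp_all add: add.commute)
    have "(\<lambda>n. \<bar>(T k - T (k + n)) - (\<phi> k - \<phi> (k + n))\<bar>) \<longlonglongrightarrow> \<bar>(T k - 0) - (\<phi> k - 0)\<bar>"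
      by (intro tendsto_intros lim)
    then show "(\<lambda>n. \<bar>(T k - T (k + n)) - (\<phi> k - \<phi> (k + n))\<bar>) \<longlonglongrightarrow> \<bar>T k - \<phi> k\<bar>"
      by simp
    have "(\<lambda>n. c * (\<phi> k - \<phi> (k + n))) \<longlonglongrightarrow> c * (\<phi> k - 0)"
      by (intro tendsto_intros lim)
    then show "(\<lambda>n. c * (\<phi> k - \<phi> (k + n))) \<longlonglongrightarrow> c * \<phi> k"
      by simp
    have "\<bar>(T k - T (k + n)) - (\<phi> k - \<phi> (k + n))\<bar> \<le> c * (\<phi> k - \<phi> (k + n))" for n
    proof (rule telescoping_abs_diff_le[where E = E])
      fix j
      assume "k \<le> j"
      with k have "N \<le> j" by simp
      then show "T j = T (Suc j) + E j" "\<bar>E j - ?b j\<bar> \<le> c * ?b j" using N by blast+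
    qed
    then show "\<exists>M. \<forall>n\<ge>M. \<bar>(T k - T (k + n)) - (\<phi> k - \<phi> (k + n))\<bar> \<le> c * (\<phi> k - \<phi> (k + n))"
      by blast
  qed
  show "\<forall>\<^sub>F k in sequentially. norm (T k - \<phi> k) \<le> c * norm (\<phi> k)"
    unfolding eventually_sequentially
  proof (intro exI allI impI)
    fix k
    assume "N \<le> k"
    then have "\<bar>T k - \<phi> k\<bar> \<le> c * \<phi> k" by (rule bound)
    also have "c * \<phi> k \<le> c * \<bar>\<phi> k\<bar>" using c by (intro mult_left_mono) auto
    finally show "norm (T k - \<phi> k) \<le> c * norm (\<phi> k)" by simp
  qed
qed

lemma tail_asymp_equiv_powr:
  fixes T E :: "nat \<Rightarrow> real"
  assumes rec: "\<forall>\<^sub>F k in sequentially. T k = T (Suc k) + E k" and T0: "T \<longlonglongrightarrow> 0"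
    and E: "(\<lambda>k. E k * real k powr (3/2)) \<longlonglongrightarrow> c" and c: "c > 0"
  shows "T \<sim>[sequentially] (\<lambda>k. 2 * c * real k powr (-1/2))"
proof (rule telescoping_asymp_equiv[OF rec _ _ T0])
  have "E \<sim>[sequentially] (\<lambda>k. c * real k powr (-3/2))"
  proof (rule asymp_equivI')
    have "(\<lambda>k. E k * real k powr (3/2) / c) \<longlonglongrightarrow> 1" using tendsto_divide[OF E tendsto_const[of c]] c by simp
    moreover have "\<forall>\<^sub>F k in sequentially. E k * real k powr (3/2) / c = E k / (c * real k powr (-3/2))"
      using eventually_gt_at_top[of 0] by eventually_elim (simp add: powr_minus_divide)
    ultimately show "(\<lambda>k. E k / (c * real k powr (-3/2))) \<longlonglongrightarrow> 1" by (rule Lim_transform_eventually)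
  qed
  also have "(\<lambda>k::nat. c * real k powr (-3/2))
      \<sim>[sequentially] (\<lambda>k. c * (2 * (real k powr (-1/2) - (real k + 1) powr (-1/2))))"
    by (intro asymp_equiv_intros) real_asymp
  finally show "E \<sim>[sequentially] (\<lambda>k. 2 * c * real k powr (-1/2) - 2 * c * real (Suc k) powr (-1/2))"
    by (simp add: algebra_simps)
  have "\<forall>\<^sub>F k in sequentially. (real k + 1) powr (-1/2) \<le> real k powr (-1/2)"
    by real_asymp
  then show "\<forall>\<^sub>F k in sequentially. 2 * c * real (Suc k) powr (-1/2) \<le> 2 * c * real k powr (-1/2)"
    by eventually_elim (use c in \<open>simp add: add.commute\<close>)
  show "(\<lambda>k. 2 * c * real k powr (-1/2)) \<longlonglongrightarrow> 0"
    by real_asymp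
qed

lemma asymp_equiv_half_index:
  fixes T :: "nat \<Rightarrow> real"
  assumes "T \<sim>[sequentially] (\<lambda>k. c * real k powr (-1/2))"
  shows "(\<lambda>t. T ((t + a) div 2)) \<sim>[sequentially] (\<lambda>t. c * sqrt 2 * real t powr (-1/2))"
proof -
  have "\<forall>t\<ge>2 * Z. Z \<le> (t + a) div 2" for Z by presburger
  then have "filterlim (\<lambda>t. (t + a) div 2) at_top sequentially"
    by (auto simp: filterlim_at_top eventually_sequentially)
  from asymp_equiv_compose'[OF assms this]
  have "(\<lambda>t. T ((t + a) div 2)) \<sim>[sequentially] (\<lambda>t. c * real ((t + a) div 2) powr (-1/2))" .
  also have "(\<lambda>t. real ((t + a) div 2)) \<sim>[sequentially] (\<lambda>t. real t / 2)"
  proof (rule asymp_equiv_sandwich_real)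
    show "(\<lambda>t::nat. (real t + real a - 1) / 2) \<sim>[sequentially] (\<lambda>t. real t / 2)"
      and "(\<lambda>t::nat. (real t + real a) / 2) \<sim>[sequentially] (\<lambda>t. real t / 2)"
      by real_asymp+
    have "t + a \<le> 2 * ((t + a) div 2) + 1" "2 * ((t + a) div 2) \<le> t + a" for t
      by linarith+
    then show "\<forall>\<^sub>F t in sequentially.
        real ((t + a) div 2) \<in> {(real t + real a - 1) / 2..(real t + real a) / 2}"
      by (intro always_eventually allI) (auto simp flip: of_nat_le_iff)
  qed
  then have "(\<lambda>t. c * real ((t + a) div 2) powr (-1/2)) \<sim>[sequentially] (\<lambda>t. c * (real t / 2) powr (-1/2))"
    by (intro asymp_equiv_intros) auto
  also have "(\<lambda>t. c * (real t / 2) powr (-1/2)) = (\<lambda>t. c * sqrt 2 * real t powr (-1/2))"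
    by (simp add: powr_divide powr_minus_divide powr_half_sqrt)
  finally show ?thesis .
qed

lemma tail_prob_asymp:
  assumes x: "x \<ge> 1" and y: "y \<ge> 1"
  shows "tail_prob x y \<sim>[sequentially] (\<lambda>t. 2 * tail_const x y * sqrt 2 * real t powr (-1/2))"
proof -
  define T where "T k = tail_prob x y (2 * k - (x + y))" for k
  have step: "T k = T (Suc k) + diag_drop x y k" if k: "k \<ge> max x y" for k
  proof -
    define t where "t = 2 * k - (x + y)"
    have "Suc (Suc t) = 2 * Suc k - (x + y)" "odd (Suc t + x + y)" using k by (auto simp: t_def)
    then show ?thesis
      using tail_prob_Suc[OF x y, of t] tail_prob_Suc[OF x y, of "Suc t"] tail_drop_odd[of "Suc t" x y]
      by (simp add: T_def diag_drop_def t_def)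
  qed
  have rec: "\<forall>\<^sub>F k in sequentially. T k = T (Suc k) + diag_drop x y k"
    by (rule eventually_mono[OF eventually_ge_at_top[of "max x y"]]) (rule step)
  have "\<forall>t\<ge>Z + x + y. Z \<le> 2 * t - (x + y)" for Z by auto
  then have "filterlim (\<lambda>k. 2 * k - (x + y)) at_top sequentially"
    by (auto simp: filterlim_at_top eventually_sequentially)
  then have "T \<longlonglongrightarrow> 0"
    unfolding T_def by (rule filterlim_compose[OF tail_prob_tendsto_0[OF x y]])
  from tail_asymp_equiv_powr[OF rec this diag_drop_limit[OF x y] tail_const_pos]
  have T: "T \<sim>[sequentially] (\<lambda>k. 2 * tail_const x y * real k powr (-1/2))" .
  have parity: "tail_prob x y t = T ((t + (x + y + 1)) div 2)" for t
  proof (cases "even (t + x + y)")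
    case True
    then have "2 * ((t + (x + y + 1)) div 2) - (x + y) = t" by presburger
    then show ?thesis by (simp add: T_def)
  next
    case False
    then have "2 * ((t + (x + y + 1)) div 2) - (x + y) = Suc t" by presburger
    then show ?thesis using tail_prob_Suc[OF x y, of t] tail_drop_odd[of t x y] False
      by (simp add: T_def add.assoc)
  qed
  have "tail_prob x y = (\<lambda>t. T ((t + (x + y + 1)) div 2))" by (intro ext parity)
  then show ?thesis by (simp only: asymp_equiv_half_index[OF T])
qed

lemma Beta_eq_inverse_beta_coeff:
  assumes "x \<ge> 1" "y \<ge> 1"
  shows "Beta (real x) (real y) = 1 / beta_coeff x y"
proof -
  have Gamma_nat: "Gamma (real n) = fact (n - 1)" if "n \<ge> 1" for n
    using Gamma_fact[of "n - 1", where 'a = real] that by (simp add: of_nat_diff)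
  have "Beta (real x) (real y) = Gamma (real x) * Gamma (real y) / Gamma (real (x + y))"
    by (simp add: Beta_def)
  also have "\<dots> = fact (x - 1) * fact (y - 1) / fact (x + y - 1)"
    using assms by (simp only: Gamma_nat)
  finally show ?thesis by (simp add: beta_coeff_def)
qed

lemma tail_const_eq:
  assumes "x \<ge> 1" "y \<ge> 1"
  shows "2 * tail_const x y * sqrt 2 = 1 / (2 powr (real x + real y - 5/2) * sqrt pi * Beta (real x) (real y))"
proof -
  have "(2::real) powr (5/2) = 4 * sqrt 2"
    using powr_add[of "2::real" 2 "1/2"] by (simp add: powr_half_sqrt)
  then have "(2::real) powr (real x + real y - 5/2) = 2 ^ (x + y) / (4 * sqrt 2)"
    by (simp add: powr_diff powr_realpow flip: of_nat_add)
  then show ?thesis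
    using beta_coeff_pos[of x y]
    by (simp add: Beta_eq_inverse_beta_coeff[OF assms] tail_const_def field_simps)
qed

theorem theorem1:
  fixes x0 y0 :: nat
  assumes "x0 \<ge> 1" and "y0 \<ge> 1"
  shows "(\<lambda>t::nat. measure ca_space {\<omega> \<in> space ca_space. last_tie 1 x0 y0 \<omega> \<ge> ereal (real t)})
          \<sim>[sequentially]
         (\<lambda>t::nat. 1 / (2 powr (real x0 + real y0 - 5/2) * sqrt pi * Beta (real x0) (real y0))
                    * real t powr (-1/2))"
proof -
  have "(\<lambda>t. measure ca_space {\<omega> \<in> space ca_space. last_tie 1 x0 y0 \<omega> \<ge> ereal (real t)}) = tail_prob x0 y0"
    using measure_last_tie_ge[OF assms] by (intro ext) simp
  then show ?thesis
    using tail_prob_asymp[OF assms] by (simp add: tail_const_eq[OF assms])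
qed

end
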